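(* Let $A=D[X,Y;\sigma,a]$ be a generalized Weyl algebra of rank $n$, where $D$ is a $K$-algebra, and let $\Delta=\{\mathrm{ad}_{X_1},\dots,\mathrm{ad}_{X_n}\}$ and $\Delta'=\{\mathrm{ad}_{Y_1},\dots,\mathrm{ad}_{Y_n}\}$. Then: (1) $A$ is a $\Delta$-locally nilpotent algebra if and only if the maps $\sigma_1-1,\dots,\sigma_n-1$ are locally nilpotent maps on $D$. (2) $A$ is a $\Delta'$-locally nilpotent algebra if and only if the maps $\sigma_1^{-1}-1,\dots,\sigma_n^{-1}-1$ are locally nilpotent maps on $D$.
   Context: Let $\sigma=(\sigma_1,\dots,\sigma_n)$ be commuting automorphisms of $D$ and $a=(a_1,\dots,a_n)$ elements of the centre of $D$ with $\sigma_i(a_j)=a_j$ for $i\ne j$. The generalized Weyl algebra $D[X,Y;\sigma,a]$ is the ring generated by $D$ and $X_1,\dots,X_n,Y_1,\dots,Y_n$ subject to $Y_iX_i=a_i$, $X_iY_i=\sigma_i(a_i)$, $X_id=\sigma_i(d)X_i$, $Y_id=\sigma_i^{-1}(d)Y_i$ ($d\in D$), and $[X_i,X_j]=[X_i,Y_j]=[Y_i,Y_j]=0$ for $i\ne j$. $\mathrm{ad}_x(f)=xf-fx$. For $i\ge1$, $\Delta^i=\{\delta_1\cdots\delta_i\mid\delta_j\in\Delta\}$; $A$ is $\Delta$-locally nilpotent if every $f\in A$ satisfies $\Delta^{i}f=0$ for some $i\ge1$. A map $g$ is locally nilpotent on $D$ if for every $d\in D$ there is $m$ with $g^m(d)=0$.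 *)

theory Defs
  imports Main
begin

text \<open>Generalized Weyl algebras, described inside an ambient ring type 'a:
  the whole type 'a plays the role of A, D is a subring of A.\<close>

definition ad :: "'a::ring \<Rightarrow> 'a \<Rightarrow> 'a" where
  "ad x f = x * f - f * x"

definition subring_of :: "'a::ring_1 set \<Rightarrow> bool" where
  "subring_of D \<longleftrightarrow> 0 \<in> D \<and> 1 \<in> D \<and>
     (\<forall>x\<in>D. \<forall>y\<in>D. x + y \<in> D \<and> x - y \<in> D \<and> x * y \<in> D)"

definition ring_automorphism_on :: "'a::ring_1 set \<Rightarrow> ('a \<Rightarrow> 'a) \<Rightarrow> bool" where
  "ring_automorphism_on D s \<longleftrightarrow> bij_betw s D D \<and> s 1 = 1 \<and>
     (\<forall>x\<in>D. \<forall>y\<in>D. s (x + y) = s x + s y \<and> s (x * y) = s x * s y)"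

inductive_set gen_ring :: "'a::ring_1 set \<Rightarrow> 'a set" for S where
  base: "x \<in> S \<Longrightarrow> x \<in> gen_ring S"
| one: "1 \<in> gen_ring S"
| add: "x \<in> gen_ring S \<Longrightarrow> y \<in> gen_ring S \<Longrightarrow> x + y \<in> gen_ring S"
| neg: "x \<in> gen_ring S \<Longrightarrow> - x \<in> gen_ring S"
| mult: "x \<in> gen_ring S \<Longrightarrow> y \<in> gen_ring S \<Longrightarrow> x * y \<in> gen_ring S"

text \<open>Standard monomials v_alpha, alpha in Z^n (indices 1..n; alpha i = 0 outside).\<close>
definition gwa_mono1 :: "'a::ring_1 \<Rightarrow> 'a \<Rightarrow> int \<Rightarrow> 'a" where
  "gwa_mono1 x y k = (if k \<ge> 0 then x ^ nat k else y ^ nat (- k))"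

definition gwa_mono :: "nat \<Rightarrow> (nat \<Rightarrow> 'a::ring_1) \<Rightarrow> (nat \<Rightarrow> 'a) \<Rightarrow> (nat \<Rightarrow> int) \<Rightarrow> 'a" where
  "gwa_mono n X Y \<alpha> = prod_list (map (\<lambda>i. gwa_mono1 (X i) (Y i) (\<alpha> i)) [1..<n+1])"

definition gwa_index :: "nat \<Rightarrow> (nat \<Rightarrow> int) set" where
  "gwa_index n = {\<alpha>. \<forall>i. i \<notin> {1..n} \<longrightarrow> \<alpha> i = 0}"

text \<open>The ambient ring (all of 'a) is the generalized Weyl algebra D[X,Y;sigma,a]
  of rank n: it is generated by D and the X_i, Y_i subject to the defining relations,
  and no further relations hold, i.e. the standard monomials v_alpha are left
  D-linearly independent (so A is the free left D-module on them).\<close>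
definition is_GWA :: "nat \<Rightarrow> 'a::ring_1 set \<Rightarrow> (nat \<Rightarrow> 'a \<Rightarrow> 'a) \<Rightarrow> (nat \<Rightarrow> 'a)
    \<Rightarrow> (nat \<Rightarrow> 'a) \<Rightarrow> (nat \<Rightarrow> 'a) \<Rightarrow> bool" where
  "is_GWA n D \<sigma> a X Y \<longleftrightarrow>
     subring_of D \<and>
     (\<forall>i\<in>{1..n}. ring_automorphism_on D (\<sigma> i)) \<and>
     (\<forall>i\<in>{1..n}. \<forall>j\<in>{1..n}. \<forall>d\<in>D. \<sigma> i (\<sigma> j d) = \<sigma> j (\<sigma> i d)) \<and>
     (\<forall>i\<in>{1..n}. a i \<in> D \<and> (\<forall>d\<in>D. a i * d = d * a i)) \<and>
     (\<forall>i\<in>{1..n}. \<forall>j\<in>{1..n}. i \<noteq> j \<longrightarrow> \<sigma> i (a j) = a j) \<and>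
     (\<forall>i\<in>{1..n}. Y i * X i = a i \<and> X i * Y i = \<sigma> i (a i)) \<and>
     (\<forall>i\<in>{1..n}. \<forall>d\<in>D. X i * d = \<sigma> i d * X i \<and> Y i * d = inv_into D (\<sigma> i) d * Y i) \<and>
     (\<forall>i\<in>{1..n}. \<forall>j\<in>{1..n}. i \<noteq> j \<longrightarrow>
        X i * X j = X j * X i \<and> X i * Y j = Y j * X i \<and> Y i * Y j = Y j * Y i) \<and>
     gen_ring (D \<union> X ` {1..n} \<union> Y ` {1..n}) = UNIV \<and>
     (\<forall>S c. finite S \<longrightarrow> S \<subseteq> gwa_index n \<longrightarrow> (\<forall>\<alpha>\<in>S. c \<alpha> \<in> D) \<longrightarrow>
        (\<Sum>\<alpha>\<in>S. c \<alpha> * gwa_mono n X Y \<alpha>) = 0 \<longrightarrow> (\<forall>\<alpha>\<in>S. c \<alpha> = 0))"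

text \<open>Delta^i = {delta_1 ... delta_i | delta_j in Delta}; the ring (all of 'a) is
  Delta-locally nilpotent if every f has some i >= 1 with Delta^i f = 0.\<close>
definition Delta_locally_nilpotent :: "('a::ring_1 \<Rightarrow> 'a) set \<Rightarrow> bool" where
  "Delta_locally_nilpotent \<Delta> \<longleftrightarrow>
     (\<forall>f. \<exists>m\<ge>1. \<forall>ds. length ds = m \<longrightarrow> set ds \<subseteq> \<Delta> \<longrightarrow> foldr (\<circ>) ds id f = 0)"

definition locally_nilpotent_on :: "'a::ring_1 set \<Rightarrow> ('a \<Rightarrow> 'a) \<Rightarrow> bool" where
  "locally_nilpotent_on D g \<longleftrightarrow> (\<forall>d\<in>D. \<exists>m. (g ^^ m) d = 0)"

end

theory Submission
  imports Defs
begin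

(* The maps ad (X i) are derivations, so by the Leibniz rule the elements f with \<Delta>^m f = 0
   for some m form a subring, and A is \<Delta>-locally nilpotent iff its generators (D, the X j
   and the Y j) are.  If P commutes with all X j and d \<in> D, then
   ad (X i) (d P) = (\<sigma> i - 1)(d) (X i P); hence a word in the ad (X i) sends d to the
   corresponding word in the \<sigma> i - 1, times a monomial in the X j.  As c X i^m = 0 forces
   c = 0, local nilpotence of the ad (X i) on D is that of the \<sigma> i - 1.  Conversely, the
   \<sigma> i - 1 commute, so separately locally nilpotent they are jointly locally nilpotent on D;
   and ad (X i) (X j) = 0 while ad (X i) (Y j) is 0 or \<sigma> j (a j) - a j \<in> D.  Part (2) is
   the same argument for \<sigma> i^-1, Y i, X i in place of \<sigma> i, X i, Y i. *)

(* annihilated_by_pow \<Delta> m f says \<Delta>^m f = 0 in the notation of the paper; the recursion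
   peels off the map that is applied first. *)
fun annihilated_by_pow :: "('a::zero \<Rightarrow> 'a) set \<Rightarrow> nat \<Rightarrow> 'a \<Rightarrow> bool" where
  "annihilated_by_pow \<Delta> 0 f \<longleftrightarrow> f = 0"
| "annihilated_by_pow \<Delta> (Suc m) f \<longleftrightarrow> (\<forall>\<delta>\<in>\<Delta>. annihilated_by_pow \<Delta> m (\<delta> f))"

lemma foldr_comp_snoc: "foldr (\<circ>) (ds @ [\<delta>]) id f = foldr (\<circ>) ds id (\<delta> f)"
  by (induction ds) simp_all

lemma annihilated_by_pow_iff_words:
  "annihilated_by_pow \<Delta> m f \<longleftrightarrow>
     (\<forall>ds. length ds = m \<longrightarrow> set ds \<subseteq> \<Delta> \<longrightarrow> foldr (\<circ>) ds id f = 0)"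
proof (induction m arbitrary: f)
  case 0
  then show ?case by simp
next
  case (Suc m)
  have "(\<forall>ds. length ds = Suc m \<longrightarrow> set ds \<subseteq> \<Delta> \<longrightarrow> foldr (\<circ>) ds id f = 0) \<longleftrightarrow>
        (\<forall>\<delta>\<in>\<Delta>. \<forall>ds. length ds = m \<longrightarrow> set ds \<subseteq> \<Delta> \<longrightarrow> foldr (\<circ>) ds id (\<delta> f) = 0)"
  proof (intro iffI ballI allI impI)
    fix \<delta> ds assume words: "\<forall>ds. length ds = Suc m \<longrightarrow> set ds \<subseteq> \<Delta> \<longrightarrow> foldr (\<circ>) ds id f = 0"
      and "\<delta> \<in> \<Delta>" "length ds = m" "set ds \<subseteq> \<Delta>"
    then show "foldr (\<circ>) ds id (\<delta> f) = 0"
      using words[rule_format, of "ds @ [\<delta>]"] by (simp add: foldr_comp_snoc del: foldr_append)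
  next
    fix ds assume "\<forall>\<delta>\<in>\<Delta>. \<forall>ds. length ds = m \<longrightarrow> set ds \<subseteq> \<Delta> \<longrightarrow> foldr (\<circ>) ds id (\<delta> f) = 0"
      and "length ds = Suc m" "set ds \<subseteq> \<Delta>"
    then show "foldr (\<circ>) ds id f = 0"
      by (auto simp: length_Suc_conv_rev foldr_comp_snoc simp del: foldr_append)
  qed
  then show ?case unfolding annihilated_by_pow.simps Suc.IH by (rule sym)
qed

lemma annihilated_by_pow_zero:
  "\<forall>\<delta>\<in>\<Delta>. \<delta> 0 = 0 \<Longrightarrow> annihilated_by_pow \<Delta> m 0"
  by (induction m) auto

lemma annihilated_by_pow_Suc:
  "\<forall>\<delta>\<in>\<Delta>. \<delta> 0 = 0 \<Longrightarrow> annihilated_by_pow \<Delta> m f \<Longrightarrow> annihilated_by_pow \<Delta> (Suc m) f"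
  by (induction m arbitrary: f) auto

lemma annihilated_by_pow_mono:
  assumes "\<forall>\<delta>\<in>\<Delta>. \<delta> 0 = 0" "annihilated_by_pow \<Delta> m f" "m \<le> m'"
  shows "annihilated_by_pow \<Delta> m' f"
  using assms(3,2)
  by (induction rule: dec_induct) (use annihilated_by_pow_Suc[OF assms(1)] in blast)+

lemma annihilated_by_pow_funpow:
  "annihilated_by_pow \<Delta> m f \<Longrightarrow> \<delta> \<in> \<Delta> \<Longrightarrow> (\<delta> ^^ m) f = 0"
  by (induction m arbitrary: f) (simp_all add: funpow_Suc_right del: funpow.simps)

lemma annihilated_by_pow_uniform:
  assumes "\<forall>\<delta>\<in>\<Delta>. \<delta> 0 = 0" "finite J" "\<forall>j\<in>J. \<exists>m. annihilated_by_pow \<Delta> m (f j)"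
  shows "\<exists>m. \<forall>j\<in>J. annihilated_by_pow \<Delta> m (f j)"
  using assms(2,3)
proof (induction J rule: finite_induct)
  case empty
  then show ?case by simp
next
  case (insert j J)
  then obtain m m' where "\<forall>i\<in>J. annihilated_by_pow \<Delta> m (f i)" "annihilated_by_pow \<Delta> m' (f j)"
    by auto
  then have "\<forall>i\<in>insert j J. annihilated_by_pow \<Delta> (max m m') (f i)"
    using annihilated_by_pow_mono[OF assms(1), of _ _ "max m m'"] by auto
  then show ?case by (rule exI)
qed

lemma Delta_locally_nilpotent_iff_annihilated:
  assumes "\<forall>\<delta>\<in>\<Delta>. \<delta> 0 = 0"
  shows "Delta_locally_nilpotent \<Delta> \<longleftrightarrow> (\<forall>f. \<exists>m. annihilated_by_pow \<Delta> m f)"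
proof -
  have "(\<exists>m\<ge>1. annihilated_by_pow \<Delta> m f) \<longleftrightarrow> (\<exists>m. annihilated_by_pow \<Delta> m f)" for f
  proof
    assume "\<exists>m. annihilated_by_pow \<Delta> m f"
    then obtain m where "annihilated_by_pow \<Delta> m f" ..
    then have "annihilated_by_pow \<Delta> (Suc m) f" by (rule annihilated_by_pow_Suc[OF assms])
    moreover have "Suc m \<ge> 1" by simp
    ultimately show "\<exists>m\<ge>1. annihilated_by_pow \<Delta> m f" by blast
  qed blast
  then show ?thesis
    unfolding Delta_locally_nilpotent_def annihilated_by_pow_iff_words[symmetric] by simp
qed

definition derivation :: "('a::ring \<Rightarrow> 'a) \<Rightarrow> bool" where
  "derivation \<delta> \<longleftrightarrow> (\<forall>x y. \<delta> (x + y) = \<delta> x + \<delta> y \<and> \<delta> (x * y) = \<delta> x * y + x * \<delta> y)"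

lemma derivation_ad: "derivation (ad x)"
  unfolding derivation_def ad_def by (simp add: algebra_simps)

lemma derivation_zero: "derivation \<delta> \<Longrightarrow> \<delta> 0 = 0"
  unfolding derivation_def by (metis add_cancel_right_right add_0)

lemma derivation_one: "derivation (\<delta> :: 'a::ring_1 \<Rightarrow> 'a) \<Longrightarrow> \<delta> 1 = 0"
  unfolding derivation_def by (metis add_cancel_right_right mult_1_left mult_1_right)

lemma derivation_uminus: "derivation \<delta> \<Longrightarrow> \<delta> (- x) = - \<delta> x"
  using derivation_zero unfolding derivation_def by (metis add.inverse_unique add.right_inverse)

lemma annihilated_by_pow_add:
  "\<forall>\<delta>\<in>\<Delta>. derivation \<delta> \<Longrightarrow> annihilated_by_pow \<Delta> m f \<Longrightarrow> annihilated_by_pow \<Delta> m g \<Longrightarrow>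
     annihilated_by_pow \<Delta> m (f + g)"
  by (induction m arbitrary: f g) (auto simp: derivation_def)

lemma annihilated_by_pow_uminus:
  "\<forall>\<delta>\<in>\<Delta>. derivation \<delta> \<Longrightarrow> annihilated_by_pow \<Delta> m f \<Longrightarrow> annihilated_by_pow \<Delta> m (- f)"
  by (induction m arbitrary: f) (auto simp: derivation_uminus)

lemma annihilated_by_pow_mult:
  assumes der: "\<forall>\<delta>\<in>\<Delta>. derivation \<delta>"
  shows "annihilated_by_pow \<Delta> p f \<Longrightarrow> annihilated_by_pow \<Delta> q g \<Longrightarrow>
    annihilated_by_pow \<Delta> (p + q) (f * g)"
proof (induction "p + q" arbitrary: p q f g)
  case 0
  then show ?case by simp
next
  case (Suc n)
  have zero: "\<forall>\<delta>\<in>\<Delta>. \<delta> 0 = 0" using der derivation_zero by blast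
  show ?case
  proof (cases "f = 0 \<or> g = 0")
    case True
    then show ?thesis using annihilated_by_pow_zero[OF zero] by auto
  next
    case False
    with Suc.prems obtain p' q' where p: "p = Suc p'" and q: "q = Suc q'"
      by (cases p; cases q) auto
    have "annihilated_by_pow \<Delta> n (\<delta> (f * g))" if \<delta>: "\<delta> \<in> \<Delta>" for \<delta>
    proof -
      have "\<delta> (f * g) = \<delta> f * g + f * \<delta> g" using der \<delta> unfolding derivation_def by blast
      moreover have "annihilated_by_pow \<Delta> n (\<delta> f * g)"
        using Suc.hyps(1)[of p' q] Suc.hyps(2) Suc.prems \<delta> p by simp
      moreover have "annihilated_by_pow \<Delta> n (f * \<delta> g)"
        using Suc.hyps(1)[of p q'] Suc.hyps(2) Suc.prems \<delta> q by simp
      ultimately show ?thesis using annihilated_by_pow_add[OF der] by simp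
    qed
    then show ?thesis by (simp add: Suc.hyps(2)[symmetric])
  qed
qed

lemma annihilated_by_pow_gen_ring:
  assumes der: "\<forall>\<delta>\<in>\<Delta>. derivation \<delta>"
    and gens: "\<forall>s\<in>S. \<exists>m. annihilated_by_pow \<Delta> m s"
  shows "x \<in> gen_ring S \<Longrightarrow> \<exists>m. annihilated_by_pow \<Delta> m x"
proof (induction rule: gen_ring.induct)
  case (base x)
  then show ?case using gens by blast
next
  case one
  have "annihilated_by_pow \<Delta> 1 1" using der by (simp add: derivation_one)
  then show ?case by blast
next
  case (add x y)
  then obtain m m' where "annihilated_by_pow \<Delta> m x" "annihilated_by_pow \<Delta> m' y" by blast
  then have "annihilated_by_pow \<Delta> (m + m') x" "annihilated_by_pow \<Delta> (m + m') y"
    using annihilated_by_pow_mono der derivation_zero le_add1 le_add2 by metis+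
  then show ?case using annihilated_by_pow_add[OF der] by blast
next
  case (neg x)
  then show ?case using annihilated_by_pow_uminus[OF der] by blast
next
  case (mult x y)
  then show ?case using annihilated_by_pow_mult[OF der] by blast
qed

lemma funpow_in:
  "\<forall>x\<in>D. g x \<in> D \<Longrightarrow> x \<in> D \<Longrightarrow> (g ^^ j) x \<in> D"
  by (induction j) auto

lemma funpow_commute_on:
  assumes "\<forall>x\<in>D. g x \<in> D" "\<forall>x\<in>D. g (f x) = f (g x)" "x \<in> D"
  shows "(g ^^ j) (f x) = f ((g ^^ j) x)"
  using assms funpow_in[OF assms(1,3)] by (induction j) auto

(* In a word of length p + M over insert t \<Delta>, either t occurs p times or the maps from \<Delta>
   occur M times; as t commutes with them, the word kills x in both cases. *)
lemma annihilated_by_pow_insert: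
  assumes maps: "\<forall>\<delta>\<in>insert t \<Delta>. \<forall>x\<in>D. \<delta> x \<in> D"
    and zero: "\<forall>\<delta>\<in>insert t \<Delta>. \<delta> 0 = 0"
    and comm: "\<forall>\<delta>\<in>\<Delta>. \<forall>x\<in>D. t (\<delta> x) = \<delta> (t x)"
  shows "x \<in> D \<Longrightarrow> (t ^^ p) x = 0 \<Longrightarrow> \<forall>j<p. annihilated_by_pow \<Delta> M ((t ^^ j) x) \<Longrightarrow>
    annihilated_by_pow (insert t \<Delta>) (p + M) x"
proof (induction "p + M" arbitrary: p M x)
  case 0
  then show ?case by simp
next
  case (Suc n)
  show ?case
  proof (cases "x = 0")
    case True
    then show ?thesis using annihilated_by_pow_zero[OF zero] by blast
  next
    case False
    with Suc.prems obtain p' M' where p: "p = Suc p'" and M: "M = Suc M'"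
      by (cases p; cases M) auto
    have tD: "\<forall>x\<in>D. t x \<in> D" using maps by blast
    have "annihilated_by_pow (insert t \<Delta>) n (\<delta> x)" if \<delta>: "\<delta> \<in> insert t \<Delta>" for \<delta>
    proof (cases "\<delta> = t")
      case True
      have "(t ^^ j) (t x) = (t ^^ Suc j) x" for j
        by (simp only: funpow_Suc_right o_apply)
      then have "(t ^^ p') (t x) = 0" "\<forall>j<p'. annihilated_by_pow \<Delta> M ((t ^^ j) (t x))"
        using Suc.prems p by auto
      then show ?thesis using Suc.hyps(1)[of p' M "t x"] Suc.hyps(2) Suc.prems(1) tD p True
        by simp
    next
      case False
      with \<delta> have "\<delta> \<in> \<Delta>" by simp
      then have "(t ^^ j) (\<delta> x) = \<delta> ((t ^^ j) x)" for j
        using funpow_commute_on[OF tD _ Suc.prems(1)] comm by blast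
      moreover have "\<delta> 0 = 0" using zero \<open>\<delta> \<in> \<Delta>\<close> by blast
      ultimately have "(t ^^ p) (\<delta> x) = 0" "\<forall>j<p. annihilated_by_pow \<Delta> M' ((t ^^ j) (\<delta> x))"
        using Suc.prems M \<open>\<delta> \<in> \<Delta>\<close> by auto
      moreover have "\<delta> x \<in> D" using maps \<open>\<delta> \<in> \<Delta>\<close> Suc.prems(1) by blast
      ultimately show ?thesis using Suc.hyps(1)[of p M' "\<delta> x"] Suc.hyps(2) M by simp
    qed
    then show ?thesis by (simp add: Suc.hyps(2)[symmetric])
  qed
qed

lemma commuting_locally_nilpotent_jointly:
  assumes "finite \<Delta>"
    and maps: "\<forall>\<delta>\<in>\<Delta>. \<forall>x\<in>D. \<delta> x \<in> D" and zero: "\<forall>\<delta>\<in>\<Delta>. \<delta> 0 = 0"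
    and comm: "\<forall>\<delta>\<in>\<Delta>. \<forall>\<delta>'\<in>\<Delta>. \<forall>x\<in>D. \<delta> (\<delta>' x) = \<delta>' (\<delta> x)"
    and nil: "\<forall>\<delta>\<in>\<Delta>. \<forall>x\<in>D. \<exists>m. (\<delta> ^^ m) x = 0"
  shows "\<forall>x\<in>D. \<exists>m. annihilated_by_pow \<Delta> m x"
proof -
  have "\<forall>x\<in>D. \<exists>m. annihilated_by_pow \<Delta>' m x" if "\<Delta>' \<subseteq> \<Delta>" for \<Delta>'
    using finite_subset[OF that assms(1)] that
  proof (induction \<Delta>' rule: finite_induct)
    case empty
    have "annihilated_by_pow {} 1 x" for x :: 'a by simp
    then show ?case by blast
  next
    case (insert t \<Delta>')
    then have t: "t \<in> \<Delta>" and sub: "\<Delta>' \<subseteq> \<Delta>" by simp_all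
    have maps': "\<forall>\<delta>\<in>insert t \<Delta>'. \<forall>x\<in>D. \<delta> x \<in> D"
      and zero': "\<forall>\<delta>\<in>insert t \<Delta>'. \<delta> 0 = 0"
      using maps zero insert.prems by blast+
    have comm': "\<forall>\<delta>\<in>\<Delta>'. \<forall>x\<in>D. t (\<delta> x) = \<delta> (t x)"
      using comm t sub by blast
    show ?case
    proof
      fix x assume x: "x \<in> D"
      obtain p where p: "(t ^^ p) x = 0" using nil t x by auto
      have "(t ^^ j) x \<in> D" for j using funpow_in[OF _ x] maps t by auto
      then have "\<forall>j\<in>{..<p}. \<exists>m. annihilated_by_pow \<Delta>' m ((t ^^ j) x)"
        using insert.IH sub by blast
      then obtain M where "\<forall>j<p. annihilated_by_pow \<Delta>' M ((t ^^ j) x)"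
        using annihilated_by_pow_uniform[of \<Delta>' "{..<p}" "\<lambda>j. (t ^^ j) x"] zero' by auto
      then have "annihilated_by_pow (insert t \<Delta>') (p + M) x"
        using annihilated_by_pow_insert[OF maps' zero' comm' x p] by blast
      then show "\<exists>m. annihilated_by_pow (insert t \<Delta>') m x" by (rule exI)
    qed
  qed
  then show ?thesis by blast
qed

lemma ring_automorphism_on_in:
  "ring_automorphism_on D s \<Longrightarrow> x \<in> D \<Longrightarrow> s x \<in> D"
  unfolding ring_automorphism_on_def by (meson bij_betwE)

lemma ring_automorphism_on_zero:
  "subring_of D \<Longrightarrow> ring_automorphism_on D s \<Longrightarrow> s 0 = 0"
  unfolding subring_of_def ring_automorphism_on_def by (metis add_cancel_right_right)

lemma ring_automorphism_on_diff:
  assumes "subring_of D" "ring_automorphism_on D s" "x \<in> D" "y \<in> D"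
  shows "s (x - y) = s x - s y"
proof -
  have "s x = s ((x - y) + y)" by simp
  also have "\<dots> = s (x - y) + s y"
    using assms unfolding subring_of_def ring_automorphism_on_def by blast
  finally show ?thesis by (simp add: algebra_simps)
qed

lemma ring_automorphism_on_inv_into:
  assumes sub: "subring_of D" and aut: "ring_automorphism_on D s"
  shows "ring_automorphism_on D (inv_into D s)"
proof -
  have bij: "bij_betw s D D" using aut unfolding ring_automorphism_on_def by blast
  let ?r = "inv_into D s"
  have r_in: "?r x \<in> D" if "x \<in> D" for x using bij that by (metis bij_betw_def inv_into_into)
  have s_r: "s (?r x) = x" if "x \<in> D" for x using bij that by (simp add: bij_betw_inv_into_right)
  have r_s: "?r (s x) = x" if "x \<in> D" for x using bij that by (simp add: bij_betw_inv_into_left)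
  have "?r (x + y) = ?r x + ?r y \<and> ?r (x * y) = ?r x * ?r y" if "x \<in> D" "y \<in> D" for x y
  proof -
    have "s (?r x + ?r y) = x + y" "s (?r x * ?r y) = x * y"
      using aut r_in s_r that unfolding ring_automorphism_on_def by auto
    moreover have "?r x + ?r y \<in> D" "?r x * ?r y \<in> D"
      using sub r_in that unfolding subring_of_def by auto
    ultimately show ?thesis using r_s by metis
  qed
  moreover have "?r 1 = 1"
    using sub aut r_s unfolding subring_of_def ring_automorphism_on_def by metis
  ultimately show ?thesis
    unfolding ring_automorphism_on_def using bij bij_betw_inv_into by blast
qed

lemma inv_into_commute_on:
  assumes s: "bij_betw s D D" and t: "bij_betw t D D"
    and comm: "\<forall>x\<in>D. s (t x) = t (s x)" and x: "x \<in> D"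
  shows "inv_into D s (inv_into D t x) = inv_into D t (inv_into D s x)"
proof -
  let ?u = "inv_into D s (inv_into D t x)" and ?w = "inv_into D t (inv_into D s x)"
  have in_D: "inv_into D f y \<in> D" if "bij_betw f D D" "y \<in> D" for f y
    using that by (metis bij_betw_def inv_into_into)
  have u: "?u \<in> D" and w: "?w \<in> D" using in_D s t x by blast+
  have "s (t ?u) = x" using comm u s t x in_D by (simp add: bij_betw_inv_into_right)
  moreover have "s (t ?w) = x" using s t x in_D by (simp add: bij_betw_inv_into_right)
  ultimately have "s (t ?u) = s (t ?w)" by simp
  then show ?thesis using u w s t
    by (metis bij_betw_imp_inj_on bij_betwE inj_onD)
qed

(* The part of the structure of a generalized Weyl algebra seen by the maps ad (X i);
   is_GWA yields an instance for (\<sigma>, X, Y) and one for (\<sigma>^-1, Y, X). *)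
locale gwa_side =
  fixes n :: nat and D :: "'a::ring_1 set" and \<rho> :: "nat \<Rightarrow> 'a \<Rightarrow> 'a" and X Y :: "nat \<Rightarrow> 'a"
  assumes subring: "subring_of D"
    and automorphism: "i \<in> {1..n} \<Longrightarrow> ring_automorphism_on D (\<rho> i)"
    and automorphisms_commute:
      "i \<in> {1..n} \<Longrightarrow> j \<in> {1..n} \<Longrightarrow> d \<in> D \<Longrightarrow> \<rho> i (\<rho> j d) = \<rho> j (\<rho> i d)"
    and X_mult: "i \<in> {1..n} \<Longrightarrow> d \<in> D \<Longrightarrow> X i * d = \<rho> i d * X i"
    and X_commute: "i \<in> {1..n} \<Longrightarrow> j \<in> {1..n} \<Longrightarrow> X i * X j = X j * X i"
    and X_Y_commute: "i \<in> {1..n} \<Longrightarrow> j \<in> {1..n} \<Longrightarrow> i \<noteq> j \<Longrightarrow> X i * Y j = Y j * X i"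
    and X_Y_commutator: "i \<in> {1..n} \<Longrightarrow> X i * Y i - Y i * X i \<in> D"
    and generated: "gen_ring (D \<union> X ` {1..n} \<union> Y ` {1..n}) = UNIV"
    and X_pow_torsion_free: "i \<in> {1..n} \<Longrightarrow> c \<in> D \<Longrightarrow> c * X i ^ m = 0 \<Longrightarrow> c = 0"
begin

definition twist_diff :: "nat \<Rightarrow> 'a \<Rightarrow> 'a" where
  "twist_diff i d = \<rho> i d - d"

lemma twist_diff_in_D: "i \<in> {1..n} \<Longrightarrow> d \<in> D \<Longrightarrow> twist_diff i d \<in> D"
  using subring automorphism ring_automorphism_on_in
  unfolding twist_diff_def subring_of_def by blast

lemma twist_diff_zero: "i \<in> {1..n} \<Longrightarrow> twist_diff i 0 = 0"
  using ring_automorphism_on_zero[OF subring automorphism] by (simp add: twist_diff_def)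

lemma twist_diff_commute:
  assumes "i \<in> {1..n}" "j \<in> {1..n}" "d \<in> D"
  shows "twist_diff i (twist_diff j d) = twist_diff j (twist_diff i d)"
proof -
  have diff: "\<rho> k (x - y) = \<rho> k x - \<rho> k y" if "k \<in> {1..n}" "x \<in> D" "y \<in> D" for k x y
    using ring_automorphism_on_diff[OF subring automorphism] that by blast
  have in_D: "\<rho> k d \<in> D" if "k \<in> {1..n}" for k
    using ring_automorphism_on_in automorphism that assms(3) by blast
  show ?thesis
    using diff[of i] diff[of j] in_D assms automorphisms_commute[of i j d]
    by (simp add: twist_diff_def algebra_simps)
qed

lemma ad_X_twist:
  assumes "i \<in> {1..n}" "c \<in> D" "X i * P = P * X i"
  shows "ad (X i) (c * P) = twist_diff i c * (X i * P)"
proof -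
  have "X i * (c * P) = \<rho> i c * (X i * P)"
    using X_mult assms(1,2) by (simp add: mult.assoc[symmetric])
  moreover have "c * P * X i = c * (X i * P)" using assms(3) by (simp add: mult.assoc)
  ultimately show ?thesis unfolding ad_def twist_diff_def by (simp add: algebra_simps)
qed

lemma ad_X_funpow:
  assumes "i \<in> {1..n}" "d \<in> D"
  shows "(ad (X i) ^^ m) d = (twist_diff i ^^ m) d * X i ^ m"
proof (induction m)
  case 0
  then show ?case by simp
next
  case (Suc m)
  have "(twist_diff i ^^ m) d \<in> D" using assms by (simp add: funpow_in twist_diff_in_D)
  then show ?case
    using Suc ad_X_twist[OF assms(1), of "(twist_diff i ^^ m) d" "X i ^ m"]
    by (simp add: power_commutes)
qed

lemma annihilated_ad_X_if_twist_diff: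
  assumes "\<forall>j\<in>{1..n}. X j * P = P * X j" "c \<in> D"
    and "annihilated_by_pow (twist_diff ` {1..n}) m c"
  shows "annihilated_by_pow ((\<lambda>i. ad (X i)) ` {1..n}) m (c * P)"
  using assms
proof (induction m arbitrary: c P)
  case 0
  then show ?case by simp
next
  case (Suc m)
  have "annihilated_by_pow ((\<lambda>i. ad (X i)) ` {1..n}) m (twist_diff i c * (X i * P))"
    if i: "i \<in> {1..n}" for i
  proof (rule Suc.IH)
    show "\<forall>j\<in>{1..n}. X j * (X i * P) = X i * P * X j"
      using Suc.prems(1) X_commute i by (metis mult.assoc)
  qed (use Suc.prems i twist_diff_in_D in auto)
  then show ?case using ad_X_twist Suc.prems(1,2) by auto
qed

lemma D_annihilated_ad_X:
  assumes "\<forall>i\<in>{1..n}. locally_nilpotent_on D (twist_diff i)" "d \<in> D"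
  shows "\<exists>m. annihilated_by_pow ((\<lambda>i. ad (X i)) ` {1..n}) m d"
proof -
  have "\<forall>x\<in>D. \<exists>m. annihilated_by_pow (twist_diff ` {1..n}) m x"
    using assms(1) twist_diff_in_D twist_diff_zero twist_diff_commute
    by (intro commuting_locally_nilpotent_jointly) (auto simp: locally_nilpotent_on_def)
  then show ?thesis
    using annihilated_ad_X_if_twist_diff[of 1] assms(2) by fastforce
qed

lemma generators_annihilated_ad_X:
  assumes "\<forall>i\<in>{1..n}. locally_nilpotent_on D (twist_diff i)"
    and "s \<in> D \<union> X ` {1..n} \<union> Y ` {1..n}"
  shows "\<exists>m. annihilated_by_pow ((\<lambda>i. ad (X i)) ` {1..n}) m s"
  using assms(2)
proof (elim UnE imageE)
  show "s \<in> D \<Longrightarrow> ?thesis" using D_annihilated_ad_X assms(1) by blast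
next
  fix j assume "j \<in> {1..n}" "s = X j"
  then have "annihilated_by_pow ((\<lambda>i. ad (X i)) ` {1..n}) 1 s"
    using X_commute by (auto simp: ad_def)
  then show ?thesis by blast
next
  fix j assume j: "j \<in> {1..n}" and s: "s = Y j"
  obtain m where m: "annihilated_by_pow ((\<lambda>i. ad (X i)) ` {1..n}) m (X j * Y j - Y j * X j)"
    using D_annihilated_ad_X assms(1) X_Y_commutator j by blast
  have "annihilated_by_pow ((\<lambda>i. ad (X i)) ` {1..n}) m (ad (X i) s)" if "i \<in> {1..n}" for i
  proof (cases "i = j")
    case True
    then show ?thesis using m s by (simp add: ad_def)
  next
    case False
    then have "ad (X i) s = 0" using X_Y_commute that j s by (simp add: ad_def)
    then show ?thesis
      using annihilated_by_pow_zero[of "(\<lambda>i. ad (X i)) ` {1..n}"] by (simp add: ad_def)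
  qed
  then have "annihilated_by_pow ((\<lambda>i. ad (X i)) ` {1..n}) (Suc m) s" by simp
  then show ?thesis by blast
qed

theorem Delta_locally_nilpotent_ad_X_iff:
  "Delta_locally_nilpotent ((\<lambda>i. ad (X i)) ` {1..n}) \<longleftrightarrow>
     (\<forall>i\<in>{1..n}. locally_nilpotent_on D (\<lambda>d. \<rho> i d - d))"
proof -
  let ?\<Delta> = "(\<lambda>i. ad (X i)) ` {1..n}"
  have der: "\<forall>\<delta>\<in>?\<Delta>. derivation \<delta>" using derivation_ad by blast
  have zero: "\<forall>\<delta>\<in>?\<Delta>. \<delta> 0 = 0" using der derivation_zero by blast
  have twist: "(\<lambda>d. \<rho> i d - d) = twist_diff i" for i by (simp add: fun_eq_iff twist_diff_def)
  show ?thesis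
    unfolding twist Delta_locally_nilpotent_iff_annihilated[OF zero]
  proof
    assume all: "\<forall>f. \<exists>m. annihilated_by_pow ?\<Delta> m f"
    show "\<forall>i\<in>{1..n}. locally_nilpotent_on D (twist_diff i)"
      unfolding locally_nilpotent_on_def
    proof (intro ballI)
      fix i d assume i: "i \<in> {1..n}" and d: "d \<in> D"
      obtain m where "annihilated_by_pow ?\<Delta> m d" using all by blast
      then have "(ad (X i) ^^ m) d = 0" using i by (simp add: annihilated_by_pow_funpow)
      then have "(twist_diff i ^^ m) d * X i ^ m = 0" by (simp add: ad_X_funpow[OF i d])
      moreover have "(twist_diff i ^^ m) d \<in> D" using i d by (simp add: funpow_in twist_diff_in_D)
      ultimately have "(twist_diff i ^^ m) d = 0" using X_pow_torsion_free i by blast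
      then show "\<exists>m. (twist_diff i ^^ m) d = 0" by blast
    qed
  next
    assume "\<forall>i\<in>{1..n}. locally_nilpotent_on D (twist_diff i)"
    then have "\<forall>s\<in>D \<union> X ` {1..n} \<union> Y ` {1..n}. \<exists>m. annihilated_by_pow ?\<Delta> m s"
      using generators_annihilated_ad_X by blast
    then show "\<forall>f. \<exists>m. annihilated_by_pow ?\<Delta> m f"
      using annihilated_by_pow_gen_ring[OF der] generated by blast
  qed
qed

end

lemma prod_list_map_single:
  "distinct xs \<Longrightarrow> \<forall>j\<in>set xs. j \<noteq> i \<longrightarrow> f j = (1::'a::monoid_mult) \<Longrightarrow>
    prod_list (map f xs) = (if i \<in> set xs then f i else 1)"
  by (induction xs) auto

lemma gwa_mono_single:
  assumes "i \<in> {1..n}"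
  shows "gwa_mono n X Y (\<lambda>j. if j = i then k else 0) = gwa_mono1 (X i) (Y i) k"
  unfolding gwa_mono_def using assms
  by (subst prod_list_map_single[where i = i]) (auto simp: gwa_mono1_def)

lemma is_GWA_D:
  assumes "is_GWA n D \<sigma> a X Y"
  shows is_GWA_subring: "subring_of D"
    and is_GWA_automorphism: "i \<in> {1..n} \<Longrightarrow> ring_automorphism_on D (\<sigma> i)"
    and is_GWA_automorphisms_commute:
      "i \<in> {1..n} \<Longrightarrow> j \<in> {1..n} \<Longrightarrow> d \<in> D \<Longrightarrow> \<sigma> i (\<sigma> j d) = \<sigma> j (\<sigma> i d)"
    and is_GWA_a_in: "i \<in> {1..n} \<Longrightarrow> a i \<in> D"
    and is_GWA_Y_X: "i \<in> {1..n} \<Longrightarrow> Y i * X i = a i"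
    and is_GWA_X_Y: "i \<in> {1..n} \<Longrightarrow> X i * Y i = \<sigma> i (a i)"
    and is_GWA_X_mult: "i \<in> {1..n} \<Longrightarrow> d \<in> D \<Longrightarrow> X i * d = \<sigma> i d * X i"
    and is_GWA_Y_mult: "i \<in> {1..n} \<Longrightarrow> d \<in> D \<Longrightarrow> Y i * d = inv_into D (\<sigma> i) d * Y i"
    and is_GWA_X_commute:
      "i \<in> {1..n} \<Longrightarrow> j \<in> {1..n} \<Longrightarrow> i \<noteq> j \<Longrightarrow> X i * X j = X j * X i"
    and is_GWA_X_Y_commute:
      "i \<in> {1..n} \<Longrightarrow> j \<in> {1..n} \<Longrightarrow> i \<noteq> j \<Longrightarrow> X i * Y j = Y j * X i"
    and is_GWA_Y_commute:
      "i \<in> {1..n} \<Longrightarrow> j \<in> {1..n} \<Longrightarrow> i \<noteq> j \<Longrightarrow> Y i * Y j = Y j * Y i"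
    and is_GWA_generated: "gen_ring (D \<union> X ` {1..n} \<union> Y ` {1..n}) = UNIV"
    and is_GWA_independent: "finite S \<Longrightarrow> S \<subseteq> gwa_index n \<Longrightarrow> \<forall>\<alpha>\<in>S. c \<alpha> \<in> D \<Longrightarrow>
      (\<Sum>\<alpha>\<in>S. c \<alpha> * gwa_mono n X Y \<alpha>) = 0 \<Longrightarrow> \<forall>\<alpha>\<in>S. c \<alpha> = 0"
  using assms unfolding is_GWA_def by (elim conjE; simp)+

lemma is_GWA_mono1_torsion_free:
  assumes "is_GWA n D \<sigma> a X Y" "i \<in> {1..n}" "c \<in> D" "c * gwa_mono1 (X i) (Y i) k = 0"
  shows "c = 0"
proof -
  let ?\<alpha> = "\<lambda>j. if j = i then k else 0"
  have "?\<alpha> \<in> gwa_index n" using assms(2) by (auto simp: gwa_index_def)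
  moreover have "(\<Sum>\<beta>\<in>{?\<alpha>}. c * gwa_mono n X Y \<beta>) = 0"
    using gwa_mono_single[OF assms(2), of X Y k] assms(4) by simp
  ultimately show ?thesis
    using is_GWA_independent[OF assms(1), of "{?\<alpha>}" "\<lambda>_. c"] assms(3) by simp
qed

lemma is_GWA_gwa_side_X:
  assumes gwa: "is_GWA n D \<sigma> a X Y"
  shows "gwa_side n D \<sigma> X Y"
proof
  show "c = 0" if "i \<in> {1..n}" "c \<in> D" "c * X i ^ m = 0" for i c m
    using is_GWA_mono1_torsion_free[OF gwa, of i c "int m"] that by (simp add: gwa_mono1_def)
  show "X i * Y i - Y i * X i \<in> D" if "i \<in> {1..n}" for i
    using that is_GWA_subring[OF gwa] ring_automorphism_on_in[OF is_GWA_automorphism[OF gwa]]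
    unfolding is_GWA_X_Y[OF gwa that] is_GWA_Y_X[OF gwa that] subring_of_def
    by (simp add: is_GWA_a_in[OF gwa])
  show "X i * X j = X j * X i" if "i \<in> {1..n}" "j \<in> {1..n}" for i j
    using is_GWA_X_commute[OF gwa that] by (cases "i = j") simp_all
qed (fact is_GWA_subring[OF gwa] is_GWA_automorphism[OF gwa] is_GWA_automorphisms_commute[OF gwa]
      is_GWA_X_mult[OF gwa] is_GWA_X_Y_commute[OF gwa] is_GWA_generated[OF gwa])+

lemma is_GWA_gwa_side_Y:
  assumes gwa: "is_GWA n D \<sigma> a X Y"
  shows "gwa_side n D (\<lambda>i. inv_into D (\<sigma> i)) Y X"
proof
  note aut = is_GWA_automorphism[OF gwa]
  show "subring_of D" by (fact is_GWA_subring[OF gwa])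
  show "ring_automorphism_on D (inv_into D (\<sigma> i))" if "i \<in> {1..n}" for i
    using ring_automorphism_on_inv_into[OF is_GWA_subring[OF gwa] aut[OF that]] .
  show "inv_into D (\<sigma> i) (inv_into D (\<sigma> j) d) = inv_into D (\<sigma> j) (inv_into D (\<sigma> i) d)"
    if "i \<in> {1..n}" "j \<in> {1..n}" "d \<in> D" for i j d
    using aut[OF that(1)] aut[OF that(2)] is_GWA_automorphisms_commute[OF gwa that(1,2)] that(3)
    unfolding ring_automorphism_on_def by (intro inv_into_commute_on) blast+
  show "c = 0" if "i \<in> {1..n}" "c \<in> D" "c * Y i ^ m = 0" for i c m
    using is_GWA_mono1_torsion_free[OF gwa, of i c "- int m"] that
    by (cases "m = 0") (auto simp: gwa_mono1_def)
  show "Y i * X i - X i * Y i \<in> D" if "i \<in> {1..n}" for i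
    using that is_GWA_subring[OF gwa] ring_automorphism_on_in[OF aut]
    unfolding is_GWA_X_Y[OF gwa that] is_GWA_Y_X[OF gwa that] subring_of_def
    by (simp add: is_GWA_a_in[OF gwa])
  show "Y i * Y j = Y j * Y i" if "i \<in> {1..n}" "j \<in> {1..n}" for i j
    using is_GWA_Y_commute[OF gwa that] by (cases "i = j") simp_all
  show "Y i * X j = X j * Y i" if "i \<in> {1..n}" "j \<in> {1..n}" "i \<noteq> j" for i j
    using is_GWA_X_Y_commute[OF gwa that(2,1)] that(3) by simp
  show "gen_ring (D \<union> Y ` {1..n} \<union> X ` {1..n}) = UNIV"
    using is_GWA_generated[OF gwa] by (simp add: Un_ac)
qed (fact is_GWA_Y_mult[OF gwa])

theorem lemma2p3:
  fixes D :: "'a::ring_1 set" and \<sigma> :: "nat \<Rightarrow> 'a \<Rightarrow> 'a"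
    and a X Y :: "nat \<Rightarrow> 'a" and n :: nat
  assumes "is_GWA n D \<sigma> a X Y"
  shows "(Delta_locally_nilpotent ((\<lambda>i. ad (X i)) ` {1..n}) \<longleftrightarrow>
            (\<forall>i\<in>{1..n}. locally_nilpotent_on D (\<lambda>d. \<sigma> i d - d)))
       \<and> (Delta_locally_nilpotent ((\<lambda>i. ad (Y i)) ` {1..n}) \<longleftrightarrow>
            (\<forall>i\<in>{1..n}. locally_nilpotent_on D (\<lambda>d. inv_into D (\<sigma> i) d - d)))"
  using gwa_side.Delta_locally_nilpotent_ad_X_iff[OF is_GWA_gwa_side_X[OF assms]]
    gwa_side.Delta_locally_nilpotent_ad_X_iff[OF is_GWA_gwa_side_Y[OF assms]]
  by blast

end
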